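(* Let $u$ be the solution of the Cauchy problem in the context. If $\sigma\ge m_0f_0+m_1f_1$, then \[ \partial_xu(x,t)\le\frac{2}{1-x+e^{-(\sigma-m_0f_0)t}}\,e^{-m_1f_1t} \] for all $x\in[0,1]$ and $t\ge0$.
   Context: Constants: $f_0>0$, $f_1\ge0$ with $\sigma=f_0-f_1>0$; $\lambda_0,\lambda_1\ge0$; $\gamma_0,\gamma_1\in(0,1]$; $m_0=\lambda_0\gamma_0$, $m_1=\lambda_1\gamma_1$. With $\mathcal{J}_0u(x,t)=u(x+\gamma_0(1-x),t)-u(x,t)$ and $\mathcal{J}_1u(x,t)=u(x-\gamma_1x,t)-u(x,t)$, $u$ is the unique (mild) solution, which is $C^\infty$ on $[0,1]\times[0,\infty)$, of \[ \partial_tu+\sigma(1-x)x\,\partial_xu=\lambda_0f_0\mathcal{J}_0u+\lambda_1f_1\mathcal{J}_1u\ (0\le x\le1,\ t>0),\quad u(x,0)=x. \] *)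

theory Defs
  imports "HOL-Analysis.Analysis"
begin

text \<open>Classical (C^1 up to the boundary) solution of the Cauchy problem
  u_t + sigma (1-x) x u_x = lam0 f0 J0 u + lam1 f1 J1 u on [0,1] x (0,oo), u(x,0)=x.
  ux and ut are the partial derivatives of u (one-sided at the boundary).\<close>
definition is_solution ::
  "real \<Rightarrow> real \<Rightarrow> real \<Rightarrow> real \<Rightarrow> real \<Rightarrow> real \<Rightarrow>
   (real \<Rightarrow> real \<Rightarrow> real) \<Rightarrow> (real \<Rightarrow> real \<Rightarrow> real) \<Rightarrow> (real \<Rightarrow> real \<Rightarrow> real) \<Rightarrow> bool"
  where
  "is_solution f0 f1 lam0 lam1 gam0 gam1 u ux ut \<longleftrightarrow>
     (\<forall>x\<in>{0..1}. \<forall>t\<in>{0..}.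
        ((\<lambda>y. u y t) has_real_derivative ux x t) (at x within {0..1}) \<and>
        ((\<lambda>s. u x s) has_real_derivative ut x t) (at t within {0..})) \<and>
     continuous_on ({0..1} \<times> {0..}) (\<lambda>(x,t). ux x t) \<and>
     continuous_on ({0..1} \<times> {0..}) (\<lambda>(x,t). ut x t) \<and>
     (\<forall>x\<in>{0..1}. \<forall>t>0.
        ut x t + (f0 - f1) * (1 - x) * x * ux x t =
          lam0 * f0 * (u (x + gam0 * (1 - x)) t - u x t)
        + lam1 * f1 * (u (x - gam1 * x) t - u x t)) \<and>
     (\<forall>x\<in>{0..1}. u x 0 = x)"

end

theory Submission
  imports Defs
begin

(* Let V(x,t) = -2 e^(-c t) ln(1 - x + e^(-a t)) = barrier a c x t with a = sigma - m0 f0 and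
   c = m1 f1, so that the x-derivative of V is exactly the claimed bound. The residual
   of V in the equation is nondecreasing in x, and u - V is nonincreasing in x at t = 0. A comparison
   principle then keeps W = u - V nonincreasing in x for all t >= 0, i.e. u_x <= V_x.

   For the comparison principle let K be the largest increment W(y,s) - W(x,s), x <= y, s <= t. Along
   two ordered characteristics of the drift sigma (1 - x) x, which are logistic curves, the increment E
   of W satisfies E' <= (lam0 f0 + lam1 f1) (K - E), because both jumps x + gam0 (1 - x) and
   x - gam1 x preserve order. Gronwall's argument gives K <= K (1 - e^(-(lam0 f0 + lam1 f1) t)),
   hence K <= 0. *)

(* One-sided partial derivatives on the strip; continuity of the x-derivative alone already yields
   joint differentiability (has_derivative_partialsI). *)
definition strip_partials ::
  "(real \<Rightarrow> real \<Rightarrow> real) \<Rightarrow> (real \<Rightarrow> real \<Rightarrow> real) \<Rightarrow> (real \<Rightarrow> real \<Rightarrow> real) \<Rightarrow> bool"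
  where
  "strip_partials F Fx Ft \<longleftrightarrow>
     (\<forall>x\<in>{0..1}. \<forall>t\<in>{0..}.
        ((\<lambda>y. F y t) has_real_derivative Fx x t) (at x within {0..1}) \<and>
        ((\<lambda>s. F x s) has_real_derivative Ft x t) (at t within {0..})) \<and>
     continuous_on ({0..1} \<times> {0..}) (\<lambda>(x, t). Fx x t)"

lemma strip_partials_diff:
  assumes "strip_partials F Fx Ft" "strip_partials G Gx Gt"
  shows "strip_partials (\<lambda>x t. F x t - G x t) (\<lambda>x t. Fx x t - Gx x t) (\<lambda>x t. Ft x t - Gt x t)"
proof -
  have "continuous_on ({0..1} \<times> {0..}) (\<lambda>p. (\<lambda>(x, t). Fx x t) p - (\<lambda>(x, t). Gx x t) p)"
    using assms by (intro continuous_on_diff) (auto simp: strip_partials_def)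
  then show ?thesis
    using assms unfolding strip_partials_def by (simp add: case_prod_beta DERIV_diff)
qed

lemma strip_partials_has_derivative:
  assumes F: "strip_partials F Fx Ft" and t: "t \<ge> 0" and x: "x \<in> {0..1}"
  shows "((\<lambda>p. F (snd p) (fst p)) has_derivative (\<lambda>p. Ft x t * fst p + Fx x t * snd p))
           (at (t, x) within {0..} \<times> {0..1})"
proof -
  have "continuous_on ({0..} \<times> {0..1}) (\<lambda>(t, x). Fx x t)"
    using F continuous_on_swap_args[of "{0..1}" "{0..}" "\<lambda>x t. Fx x t"]
    by (simp add: strip_partials_def)
  then have "continuous_on ({0..} \<times> {0..1}) (\<lambda>(t, x). blinfun_mult_right (Fx x t))"
    using bounded_linear.continuous_on[OF bounded_linear_blinfun_mult_right]
    by (simp add: case_prod_beta)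
  then have cont: "continuous (at (t, x) within {0..} \<times> {0..1}) (\<lambda>(t, x). blinfun_mult_right (Fx x t))"
    using t x continuous_on_eq_continuous_within by blast
  have dt: "((\<lambda>s. F x s) has_derivative (*) (Ft x t)) (at t within {0..})"
    using F t x by (simp add: strip_partials_def has_field_derivative_def)
  have dx: "((\<lambda>y. F y s) has_derivative blinfun_apply (blinfun_mult_right (Fx z s))) (at z within {0..1})"
    if "s \<in> {0..}" "z \<in> {0..1}" for s z
    using F that by (simp add: strip_partials_def has_field_derivative_def)
  show ?thesis
    using has_derivative_partialsI[where f = "\<lambda>t x. F x t", OF dt dx cont x convex_real_interval(5)]
    by (simp add: split_beta')
qed

lemma strip_partials_continuous_on:
  assumes "strip_partials F Fx Ft"
  shows "continuous_on ({0..} \<times> {0..1}) (\<lambda>p. F (snd p) (fst p))"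
proof -
  have "continuous (at p within {0..} \<times> {0..1}) (\<lambda>p. F (snd p) (fst p))"
    if "p \<in> {0..} \<times> {0..1}" for p
    using that has_derivative_continuous[OF strip_partials_has_derivative[OF assms]]
    by (cases p) auto
  then show ?thesis
    using continuous_on_eq_continuous_within by blast
qed

lemma strip_partials_bounded:
  assumes "strip_partials F Fx Ft"
  obtains B where "\<And>x t. x \<in> {0..1} \<Longrightarrow> t \<in> {0..T} \<Longrightarrow> \<bar>F x t\<bar> \<le> B"
proof -
  have "compact ((\<lambda>p. F (snd p) (fst p)) ` ({0..T} \<times> {0..1}))"
    by (intro compact_continuous_image continuous_on_subset[OF strip_partials_continuous_on[OF assms]]
        compact_Times) auto
  then obtain B where B: "\<forall>y \<in> (\<lambda>p. F (snd p) (fst p)) ` ({0..T} \<times> {0..1}). norm y \<le> B"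
    by (meson compact_imp_bounded bounded_iff)
  show ?thesis
  proof (rule that)
    fix x t :: real
    assume "x \<in> {0..1}" "t \<in> {0..T}"
    then show "\<bar>F x t\<bar> \<le> B"
      using B by force
  qed
qed

lemma strip_partials_chain_rule:
  assumes F: "strip_partials F Fx Ft"
    and g: "(g has_real_derivative g') (at s within {0..})"
    and g_range: "\<And>r. r \<ge> 0 \<Longrightarrow> g r \<in> {0..1}" and s: "s \<ge> 0"
  shows "((\<lambda>r. F (g r) r) has_real_derivative Fx (g s) s * g' + Ft (g s) s) (at s within {0..})"
proof -
  define D where "D = (\<lambda>q p. Ft (snd q) (fst q) * fst p + Fx (snd q) (fst q) * snd p)"
  have curve: "((\<lambda>r. (r, g r)) has_derivative (\<lambda>h. (h, g' * h))) (at s within {0..})"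
    using has_derivative_Pair[OF has_derivative_ident g[unfolded has_field_derivative_def]] .
  have F': "((\<lambda>p. F (snd p) (fst p)) has_derivative D q) (at q within {0..} \<times> {0..1})"
    if q_mem: "q \<in> {0..} \<times> {0..1}" for q
  proof -
    obtain t x where q: "q = (t, x)" "t \<ge> 0" "x \<in> {0..1}"
      using q_mem by (cases q) auto
    show ?thesis
      unfolding q(1) D_def fst_conv snd_conv by (rule strip_partials_has_derivative[OF F q(2,3)])
  qed
  have "(\<lambda>r. (r, g r)) ` {0..} \<subseteq> {0..} \<times> {0..1}"
    using g_range by blast
  from has_derivative_in_compose2[OF F' this _ curve] s
  have "((\<lambda>r. F (g r) r) has_derivative (\<lambda>h. D (s, g s) (h, g' * h))) (at s within {0..})"
    by simp
  then show ?thesis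
    unfolding has_field_derivative_def
    by (rule has_derivative_eq_rhs) (simp add: D_def fun_eq_iff algebra_simps)
qed

(* The flow of z' = sigma (1 - z) z, i.e. the characteristics of the transport term. *)
definition logistic_flow :: "real \<Rightarrow> real \<Rightarrow> real \<Rightarrow> real" where
  "logistic_flow \<sigma> r z = z * exp (\<sigma> * r) / (1 - z + z * exp (\<sigma> * r))"

lemma logistic_flow_denom_pos:
  fixes z \<sigma> r :: real
  assumes "0 \<le> z" "z \<le> 1"
  shows "0 < 1 - z + z * exp (\<sigma> * r)"
proof (cases "z = 0")
  case False
  with assms have "0 < z * exp (\<sigma> * r)" by auto
  with assms show ?thesis by linarith
qed simp

lemma logistic_flow_range:
  assumes "0 \<le> z" "z \<le> 1"
  shows "logistic_flow \<sigma> r z \<in> {0..1}"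
  using logistic_flow_denom_pos[OF assms, of \<sigma> r] assms
  by (simp add: logistic_flow_def divide_le_eq_1)

lemma logistic_flow_mono:
  assumes "0 \<le> z" "z \<le> z'" "z' \<le> 1"
  shows "logistic_flow \<sigma> r z \<le> logistic_flow \<sigma> r z'"
proof -
  define e where "e = exp (\<sigma> * r)"
  have "0 < 1 - z + z * e" "0 < 1 - z' + z' * e"
    using logistic_flow_denom_pos assms unfolding e_def by (meson order_trans)+
  moreover have "z * e * (1 - z' + z' * e) \<le> z' * e * (1 - z + z * e)"
  proof -
    have "z * e * (1 - z' + z' * e) - z' * e * (1 - z + z * e) = e * (z - z')"
      by (simp add: algebra_simps)
    also have "\<dots> \<le> 0"
      using assms by (simp add: e_def mult_nonneg_nonpos)
    finally show ?thesis by simp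
  qed
  ultimately show ?thesis
    by (simp add: logistic_flow_def e_def[symmetric] frac_le_eq mult.commute divide_nonpos_pos)
qed

lemma logistic_flow_0 [simp]: "logistic_flow \<sigma> 0 z = z"
  by (simp add: logistic_flow_def)

lemma logistic_flow_add:
  assumes "0 \<le> z" "z \<le> 1"
  shows "logistic_flow \<sigma> r (logistic_flow \<sigma> s z) = logistic_flow \<sigma> (r + s) z"
proof -
  define e where "e = exp (\<sigma> * s)"
  define E where "E = exp (\<sigma> * r)"
  define d where "d = 1 - z + z * e"
  have d: "0 < d" "0 < 1 - z + z * (e * E)"
    using logistic_flow_denom_pos[OF assms, of \<sigma> s] logistic_flow_denom_pos[OF assms, of \<sigma> "s + r"]
    by (simp_all add: d_def e_def E_def distrib_left exp_add)
  have flow_s: "logistic_flow \<sigma> s z = z * e / d"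
    by (simp add: logistic_flow_def d_def e_def)
  have "1 - z * e / d + z * e / d * E = (d - z * e + z * e * E) / d"
    using d by (simp add: field_simps)
  also have "\<dots> = (1 - z + z * (e * E)) / d"
    by (simp add: d_def)
  finally have denom: "1 - z * e / d + z * e / d * E = (1 - z + z * (e * E)) / d" .
  have "exp (\<sigma> * (r + s)) = e * E"
    by (simp add: e_def E_def distrib_left exp_add)
  then show ?thesis
    unfolding logistic_flow_def[of \<sigma> r] E_def[symmetric] flow_s denom
    using d by (simp add: logistic_flow_def)
qed

lemma logistic_flow_has_derivative:
  assumes "0 \<le> z" "z \<le> 1"
  shows "((\<lambda>r. logistic_flow \<sigma> r z) has_real_derivative
           \<sigma> * (1 - logistic_flow \<sigma> r z) * logistic_flow \<sigma> r z) (at r)"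
proof -
  have d: "1 - z + z * exp (\<sigma> * r) \<noteq> 0"
    using logistic_flow_denom_pos[OF assms] by (metis less_irrefl)
  show ?thesis
    unfolding logistic_flow_def
    apply (rule DERIV_cong)
     apply (rule derivative_intros | (use d in simp; fail))+
    using d by (simp add: field_simps power2_eq_square)
qed

lemma linear_differential_inequality:
  fixes E E' :: "real \<Rightarrow> real"
  assumes s: "0 \<le> s"
    and deriv: "\<And>r. r \<in> {0..s} \<Longrightarrow> (E has_real_derivative E' r) (at r within {0..s})"
    and bound: "\<And>r. r \<in> {0<..<s} \<Longrightarrow> E' r \<le> L * (K - E r)"
    and E0: "E 0 \<le> 0"
  shows "E s \<le> K * (1 - exp (- L * s))"
proof -
  define h where "h r = exp (L * r) * (E r - K)" for r
  have dh: "(h has_real_derivative exp (L * r) * (E' r - L * (K - E r))) (at r within {0..s})"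
    if "r \<in> {0..s}" for r
    unfolding h_def
    by (rule derivative_eq_intros deriv[OF that] refl | simp add: algebra_simps)+
  have "h s \<le> h 0"
  proof (rule DERIV_nonpos_imp_decreasing_open[OF s])
    fix r assume r: "0 < r" "r < s"
    then have "(h has_real_derivative exp (L * r) * (E' r - L * (K - E r))) (at r)"
      using dh[of r] at_within_Icc_at[of 0 r s] by simp
    moreover have "exp (L * r) * (E' r - L * (K - E r)) \<le> 0"
      using bound[of r] r by (simp add: mult_nonneg_nonpos)
    ultimately show "\<exists>y. (h has_real_derivative y) (at r) \<and> y \<le> 0" by blast
  next
    show "continuous_on {0..s} h"
      using dh DERIV_continuous continuous_on_eq_continuous_within by blast
  qed
  then have "exp (L * s) * (E s - K) \<le> - K"
    using E0 by (simp add: h_def)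
  then have "E s - K \<le> - K * exp (- L * s)"
    by (simp add: exp_minus field_simps)
  then show ?thesis
    by (simp add: algebra_simps)
qed

lemma antimono_on_has_real_derivative_nonpos:
  fixes f :: "real \<Rightarrow> real"
  assumes f: "antimono_on S f" and D: "(f has_real_derivative D) (at x within S)"
    and x: "x \<in> S" "x islimpt S"
  shows "D \<le> 0"
proof (rule tendsto_upperbound)
  show "((\<lambda>y. (f y - f x) / (y - x)) \<longlongrightarrow> D) (at x within S)"
    using D by (simp add: has_field_derivative_iff)
  have "(f y - f x) / (y - x) \<le> 0" if "y \<in> S" "y \<noteq> x" for y
  proof (cases "y < x")
    case True
    then show ?thesis
      using monotone_onD[OF f \<open>y \<in> S\<close> x(1)] by (simp add: divide_nonneg_neg)
  next
    case False
    with \<open>y \<noteq> x\<close> have "x < y" by simp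
    then show ?thesis
      using monotone_onD[OF f x(1) \<open>y \<in> S\<close>] by (simp add: divide_nonpos_pos)
  qed
  then show "\<forall>\<^sub>F y in at x within S. (f y - f x) / (y - x) \<le> 0"
    by (auto simp: eventually_at_filter)
  show "at x within S \<noteq> bot"
    using x(2) trivial_limit_within by blast
qed

lemma deriv_nonneg_imp_mono_on:
  fixes f f' :: "real \<Rightarrow> real"
  assumes "\<And>z. z \<in> {a..b} \<Longrightarrow> (f has_real_derivative f' z) (at z)"
    and "\<And>z. z \<in> {a..b} \<Longrightarrow> 0 \<le> f' z"
  shows "mono_on {a..b} f"
proof (rule monotone_onI)
  fix x y assume x: "x \<in> {a..b}" and y: "y \<in> {a..b}" and xy: "x \<le> y"
  show "f x \<le> f y"
  proof (rule DERIV_nonneg_imp_nondecreasing[OF xy])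
    fix z assume "x \<le> z" "z \<le> y"
    with x y have "z \<in> {a..b}" by simp
    with assms show "\<exists>d. (f has_real_derivative d) (at z) \<and> 0 \<le> d" by blast
  qed
qed

lemma deriv_nonpos_imp_antimono_on:
  fixes f f' :: "real \<Rightarrow> real"
  assumes "\<And>z. z \<in> {a..b} \<Longrightarrow> (f has_real_derivative f' z) (at z)"
    and "\<And>z. z \<in> {a..b} \<Longrightarrow> f' z \<le> 0"
  shows "antimono_on {a..b} f"
proof (rule monotone_onI)
  fix x y assume x: "x \<in> {a..b}" and y: "y \<in> {a..b}" and xy: "x \<le> y"
  show "f y \<le> f x"
  proof (rule DERIV_nonpos_imp_nonincreasing[OF xy])
    fix z assume "x \<le> z" "z \<le> y"
    with x y have "z \<in> {a..b}" by simp
    with assms show "\<exists>d. (f has_real_derivative d) (at z) \<and> d \<le> 0" by blast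
  qed
qed

definition jump_terms ::
  "real \<Rightarrow> real \<Rightarrow> real \<Rightarrow> real \<Rightarrow> (real \<Rightarrow> real \<Rightarrow> real) \<Rightarrow> real \<Rightarrow> real \<Rightarrow> real"
  where
  "jump_terms l0 l1 g0 g1 F x t =
     l0 * (F (x + g0 * (1 - x)) t - F x t) + l1 * (F (x - g1 * x) t - F x t)"

(* With l0 = lam0 f0 and l1 = lam1 f1, the equation of the theorem says that the residual of u
   vanishes for t > 0. *)
definition residual ::
  "real \<Rightarrow> real \<Rightarrow> real \<Rightarrow> real \<Rightarrow> real \<Rightarrow> (real \<Rightarrow> real \<Rightarrow> real) \<Rightarrow>
   (real \<Rightarrow> real \<Rightarrow> real) \<Rightarrow> (real \<Rightarrow> real \<Rightarrow> real) \<Rightarrow> real \<Rightarrow> real \<Rightarrow> real"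
  where
  "residual \<sigma> l0 l1 g0 g1 F Fx Ft x t =
     Ft x t + \<sigma> * (1 - x) * x * Fx x t - jump_terms l0 l1 g0 g1 F x t"

lemma residual_diff:
  "residual \<sigma> l0 l1 g0 g1 (\<lambda>x t. F x t - G x t) (\<lambda>x t. Fx x t - Gx x t) (\<lambda>x t. Ft x t - Gt x t) x t
   = residual \<sigma> l0 l1 g0 g1 F Fx Ft x t - residual \<sigma> l0 l1 g0 g1 G Gx Gt x t"
  by (simp add: residual_def jump_terms_def algebra_simps)

lemma jump_up_mono:
  fixes x y g :: real
  assumes "0 \<le> x" "x \<le> y" "y \<le> 1" "g \<in> {0..1}"
  shows "0 \<le> x + g * (1 - x)" "x + g * (1 - x) \<le> y + g * (1 - y)" "y + g * (1 - y) \<le> 1"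
proof -
  have "0 \<le> (1 - g) * (y - x)" "0 \<le> (1 - g) * (1 - y)"
    using assms by simp_all
  then show "x + g * (1 - x) \<le> y + g * (1 - y)" "y + g * (1 - y) \<le> 1"
    by (simp_all add: algebra_simps)
  show "0 \<le> x + g * (1 - x)"
    using assms by simp
qed

lemma jump_down_mono:
  fixes x y g :: real
  assumes "0 \<le> x" "x \<le> y" "y \<le> 1" "g \<in> {0..1}"
  shows "0 \<le> x - g * x" "x - g * x \<le> y - g * y" "y - g * y \<le> 1"
proof -
  have "0 \<le> (1 - g) * x" "0 \<le> (1 - g) * (y - x)" "(1 - g) * y \<le> 1"
    using assms by (simp_all add: mult_le_one)
  then show "0 \<le> x - g * x" "x - g * x \<le> y - g * y" "y - g * y \<le> 1"
    by (simp_all add: algebra_simps)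
qed

lemma jump_terms_increment_le:
  fixes W :: "real \<Rightarrow> real \<Rightarrow> real"
  assumes l0: "l0 \<ge> 0" and l1: "l1 \<ge> 0" and g0: "g0 \<in> {0..1}" and g1: "g1 \<in> {0..1}"
    and xy: "0 \<le> x" "x \<le> y" "y \<le> 1"
    and K: "\<And>x y. 0 \<le> x \<Longrightarrow> x \<le> y \<Longrightarrow> y \<le> 1 \<Longrightarrow> W y t - W x t \<le> K"
  shows "jump_terms l0 l1 g0 g1 W y t - jump_terms l0 l1 g0 g1 W x t
           \<le> (l0 + l1) * (K - (W y t - W x t))"
proof -
  have "W (y + g0 * (1 - y)) t - W (x + g0 * (1 - x)) t \<le> K"
    using K jump_up_mono[OF xy g0] by simp
  then have "l0 * ((W (y + g0 * (1 - y)) t - W (x + g0 * (1 - x)) t) - (W y t - W x t))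
      \<le> l0 * (K - (W y t - W x t))"
    using l0 by (intro mult_left_mono) simp_all
  moreover have "W (y - g1 * y) t - W (x - g1 * x) t \<le> K"
    using K jump_down_mono[OF xy g1] by simp
  then have "l1 * ((W (y - g1 * y) t - W (x - g1 * x) t) - (W y t - W x t))
      \<le> l1 * (K - (W y t - W x t))"
    using l1 by (intro mult_left_mono) simp_all
  moreover have "jump_terms l0 l1 g0 g1 W y t - jump_terms l0 l1 g0 g1 W x t
      = l0 * ((W (y + g0 * (1 - y)) t - W (x + g0 * (1 - x)) t) - (W y t - W x t))
        + l1 * ((W (y - g1 * y) t - W (x - g1 * x) t) - (W y t - W x t))"
    by (simp add: jump_terms_def algebra_simps)
  ultimately show ?thesis
    by (simp add: distrib_right)
qed

lemma residual_along_characteristic: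
  fixes \<sigma> :: real
  assumes W: "strip_partials W Wx Wt" and z: "z \<in> {0..1}" and r: "r \<ge> 0"
  defines "\<phi> \<equiv> \<lambda>r. logistic_flow \<sigma> r z"
  shows "((\<lambda>r. W (\<phi> r) r) has_real_derivative
           residual \<sigma> l0 l1 g0 g1 W Wx Wt (\<phi> r) r + jump_terms l0 l1 g0 g1 W (\<phi> r) r)
         (at r within {0..})"
proof -
  have "(\<phi> has_real_derivative \<sigma> * (1 - \<phi> r) * \<phi> r) (at r within {0..})"
    using logistic_flow_has_derivative z unfolding \<phi>_def
    by (auto intro: has_field_derivative_at_within)
  moreover have "\<phi> s \<in> {0..1}" for s
    using logistic_flow_range z by (simp add: \<phi>_def)
  ultimately have "((\<lambda>r. W (\<phi> r) r) has_real_derivative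
      Wx (\<phi> r) r * (\<sigma> * (1 - \<phi> r) * \<phi> r) + Wt (\<phi> r) r) (at r within {0..})"
    by (rule strip_partials_chain_rule[OF W _ _ r])
  then show ?thesis
    by (rule DERIV_cong) (simp add: residual_def algebra_simps)
qed

lemma increment_bound_along_characteristics:
  fixes W Wx Wt :: "real \<Rightarrow> real \<Rightarrow> real" and \<sigma> l0 l1 g0 g1 K s :: real
  assumes W: "strip_partials W Wx Wt"
    and l0: "l0 \<ge> 0" and l1: "l1 \<ge> 0" and g0: "g0 \<in> {0..1}" and g1: "g1 \<in> {0..1}"
    and res: "\<And>t. t > 0 \<Longrightarrow> antimono_on {0..1} (\<lambda>x. residual \<sigma> l0 l1 g0 g1 W Wx Wt x t)"
    and init: "antimono_on {0..1} (\<lambda>x. W x 0)"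
    and K: "\<And>x y t. 0 \<le> x \<Longrightarrow> x \<le> y \<Longrightarrow> y \<le> 1 \<Longrightarrow> t \<in> {0..s} \<Longrightarrow> W y t - W x t \<le> K"
    and xy: "0 \<le> x" "x \<le> y" "y \<le> 1" and s: "s \<ge> 0"
  shows "W y s - W x s \<le> K * (1 - exp (- (l0 + l1) * s))"
proof -
  \<comment> \<open>the characteristics through (x, s) and (y, s) start at a and b\<close>
  define a where "a = logistic_flow \<sigma> (- s) x"
  define b where "b = logistic_flow \<sigma> (- s) y"
  have ab: "0 \<le> a" "a \<le> b" "b \<le> 1"
    using logistic_flow_range[of x \<sigma> "- s"] logistic_flow_range[of y \<sigma> "- s"]
      logistic_flow_mono[OF xy, of \<sigma> "- s"] xy
    by (auto simp: a_def b_def)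
  define X where "X r = logistic_flow \<sigma> r a" for r
  define Y where "Y r = logistic_flow \<sigma> r b" for r
  have XY: "0 \<le> X r" "X r \<le> Y r" "Y r \<le> 1" for r
    using logistic_flow_range[of a \<sigma> r] logistic_flow_range[of b \<sigma> r]
      logistic_flow_mono[OF ab, of \<sigma> r] ab
    by (auto simp: X_def Y_def)
  define slope where "slope Z r =
      residual \<sigma> l0 l1 g0 g1 W Wx Wt (Z r) r + jump_terms l0 l1 g0 g1 W (Z r) r"
    for Z :: "real \<Rightarrow> real" and r
  define E where "E r = W (Y r) r - W (X r) r" for r
  have "(E has_real_derivative slope Y r - slope X r) (at r within {0..s})" if "r \<in> {0..s}" for r
  proof -
    have "(E has_real_derivative slope Y r - slope X r) (at r within {0..})"
      unfolding E_def slope_def X_def Y_def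
      using ab that by (intro DERIV_diff residual_along_characteristic[OF W]) auto
    then show ?thesis
      by (rule DERIV_subset) auto
  qed
  moreover have "slope Y r - slope X r \<le> (l0 + l1) * (K - E r)" if "r \<in> {0<..<s}" for r
  proof -
    have res_r: "antimono_on {0..1} (\<lambda>x. residual \<sigma> l0 l1 g0 g1 W Wx Wt x r)"
      using that by (intro res) simp
    have "residual \<sigma> l0 l1 g0 g1 W Wx Wt (Y r) r \<le> residual \<sigma> l0 l1 g0 g1 W Wx Wt (X r) r"
      using monotone_onD[OF res_r, of "X r" "Y r"] XY[of r] by simp
    moreover have "jump_terms l0 l1 g0 g1 W (Y r) r - jump_terms l0 l1 g0 g1 W (X r) r
        \<le> (l0 + l1) * (K - E r)"
      unfolding E_def using that
      by (intro jump_terms_increment_le[OF l0 l1 g0 g1 XY] K) simp_all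
    ultimately show ?thesis
      by (simp add: slope_def)
  qed
  moreover have "E 0 \<le> 0"
    using monotone_onD[OF init, of a b] ab by (simp add: E_def X_def Y_def)
  ultimately have "E s \<le> K * (1 - exp (- (l0 + l1) * s))"
    by (rule linear_differential_inequality[OF s])
  moreover have "E s = W y s - W x s"
    using logistic_flow_add[of x \<sigma> s "- s"] logistic_flow_add[of y \<sigma> s "- s"] xy
    by (simp add: E_def X_def Y_def a_def b_def)
  ultimately show ?thesis by simp
qed

lemma strip_partials_increment_sup:
  assumes W: "strip_partials W Wx Wt" and t: "t \<ge> 0"
  obtains K where "K \<ge> 0"
    and "\<And>x y s. 0 \<le> x \<Longrightarrow> x \<le> y \<Longrightarrow> y \<le> 1 \<Longrightarrow> s \<in> {0..t} \<Longrightarrow> W y s - W x s \<le> K"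
    and "\<And>K'. (\<And>x y s. 0 \<le> x \<Longrightarrow> x \<le> y \<Longrightarrow> y \<le> 1 \<Longrightarrow> s \<in> {0..t} \<Longrightarrow> W y s - W x s \<le> K')
           \<Longrightarrow> K \<le> K'"
proof -
  define D where "D = {W y s - W x s | x y s. 0 \<le> x \<and> x \<le> y \<and> y \<le> 1 \<and> s \<in> {0..t}}"
  have mem: "W y s - W x s \<in> D" if "0 \<le> x" "x \<le> y" "y \<le> 1" "s \<in> {0..t}" for x y s
    unfolding D_def using that by blast
  obtain B where B: "\<And>x s. x \<in> {0..1} \<Longrightarrow> s \<in> {0..t} \<Longrightarrow> \<bar>W x s\<bar> \<le> B"
    using strip_partials_bounded[OF W] by blast
  have "d \<le> 2 * B" if d: "d \<in> D" for d
  proof -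
    obtain x y s where "d = W y s - W x s" "0 \<le> x" "x \<le> y" "y \<le> 1" "s \<in> {0..t}"
      using d unfolding D_def by blast
    moreover from this have "\<bar>W x s\<bar> \<le> B" "\<bar>W y s\<bar> \<le> B"
      using B by simp_all
    ultimately show ?thesis by linarith
  qed
  then have bdd: "bdd_above D"
    by (rule bdd_aboveI)
  have upper: "W y s - W x s \<le> Sup D" if "0 \<le> x" "x \<le> y" "y \<le> 1" "s \<in> {0..t}" for x y s
    using mem[OF that] bdd by (rule cSup_upper)
  show ?thesis
  proof (rule that)
    show "0 \<le> Sup D"
      using upper[of 0 0 0] t by simp
    show "W y s - W x s \<le> Sup D" if "0 \<le> x" "x \<le> y" "y \<le> 1" "s \<in> {0..t}" for x y s
      using that by (rule upper)
    show "Sup D \<le> K'"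
      if bound: "\<And>x y s. 0 \<le> x \<Longrightarrow> x \<le> y \<Longrightarrow> y \<le> 1 \<Longrightarrow> s \<in> {0..t} \<Longrightarrow> W y s - W x s \<le> K'"
      for K'
    proof (rule cSup_least)
      show "D \<noteq> {}"
        using mem[of 0 0 0] t by auto
      show "d \<le> K'" if "d \<in> D" for d
        using \<open>d \<in> D\<close> bound unfolding D_def by blast
    qed
  qed
qed

theorem residual_antimono_imp_antimono:
  fixes W Wx Wt :: "real \<Rightarrow> real \<Rightarrow> real" and \<sigma> l0 l1 g0 g1 t :: real
  assumes W: "strip_partials W Wx Wt"
    and l0: "l0 \<ge> 0" and l1: "l1 \<ge> 0" and g0: "g0 \<in> {0..1}" and g1: "g1 \<in> {0..1}"
    and res: "\<And>t. t > 0 \<Longrightarrow> antimono_on {0..1} (\<lambda>x. residual \<sigma> l0 l1 g0 g1 W Wx Wt x t)"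
    and init: "antimono_on {0..1} (\<lambda>x. W x 0)"
    and t: "t \<ge> 0"
  shows "antimono_on {0..1} (\<lambda>x. W x t)"
proof -
  obtain K where K0: "K \<ge> 0"
    and K: "\<And>x y s. 0 \<le> x \<Longrightarrow> x \<le> y \<Longrightarrow> y \<le> 1 \<Longrightarrow> s \<in> {0..t} \<Longrightarrow> W y s - W x s \<le> K"
    and K_least: "\<And>K'. (\<And>x y s. 0 \<le> x \<Longrightarrow> x \<le> y \<Longrightarrow> y \<le> 1 \<Longrightarrow> s \<in> {0..t} \<Longrightarrow> W y s - W x s \<le> K')
                   \<Longrightarrow> K \<le> K'"
    using strip_partials_increment_sup[OF W t] by blast
  have "W y s - W x s \<le> K * (1 - exp (- (l0 + l1) * t))"
    if xy: "0 \<le> x" "x \<le> y" "y \<le> 1" and s: "s \<in> {0..t}" for x y s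
  proof -
    have Ks: "W y' r - W x' r \<le> K" if "0 \<le> x'" "x' \<le> y'" "y' \<le> 1" "r \<in> {0..s}" for x' y' r
      using that s by (intro K) simp_all
    have s0: "0 \<le> s"
      using s by simp
    have "W y s - W x s \<le> K * (1 - exp (- (l0 + l1) * s))"
      by (rule increment_bound_along_characteristics[OF W l0 l1 g0 g1 res init Ks xy s0])
    also have "\<dots> \<le> K * (1 - exp (- (l0 + l1) * t))"
    proof -
      have "(l0 + l1) * s \<le> (l0 + l1) * t"
        using s l0 l1 by (intro mult_left_mono) simp_all
      then show ?thesis
        using K0 by (intro mult_left_mono) (simp_all add: algebra_simps)
    qed
    finally show ?thesis .
  qed
  then have "K \<le> K * (1 - exp (- (l0 + l1) * t))"
    by (rule K_least)
  then have "K * exp (- (l0 + l1) * t) \<le> 0"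
    by (simp add: algebra_simps)
  then have "K \<le> 0"
    by (simp add: mult_le_0_iff)
  show ?thesis
  proof (rule monotone_onI)
    fix x y :: real
    assume "x \<in> {0..1}" "y \<in> {0..1}" "x \<le> y"
    then show "W y t \<le> W x t"
      using K[of x y t] \<open>K \<le> 0\<close> t by simp
  qed
qed

corollary dx_le_of_residual_mono:
  fixes u ux ut V Vx Vt :: "real \<Rightarrow> real \<Rightarrow> real" and \<sigma> l0 l1 g0 g1 x t :: real
  assumes u: "strip_partials u ux ut"
    and u_eq: "\<And>x t. x \<in> {0..1} \<Longrightarrow> t > 0 \<Longrightarrow> residual \<sigma> l0 l1 g0 g1 u ux ut x t = 0"
    and V: "strip_partials V Vx Vt"
    and V_res: "\<And>t. t > 0 \<Longrightarrow> mono_on {0..1} (\<lambda>x. residual \<sigma> l0 l1 g0 g1 V Vx Vt x t)"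
    and init: "antimono_on {0..1} (\<lambda>x. u x 0 - V x 0)"
    and l0: "l0 \<ge> 0" and l1: "l1 \<ge> 0" and g0: "g0 \<in> {0..1}" and g1: "g1 \<in> {0..1}"
    and x: "x \<in> {0..1}" and t: "t \<ge> 0"
  shows "ux x t \<le> Vx x t"
proof -
  define W where "W x t = u x t - V x t" for x t
  define Wx where "Wx x t = ux x t - Vx x t" for x t
  define Wt where "Wt x t = ut x t - Vt x t" for x t
  have W: "strip_partials W Wx Wt"
    unfolding W_def Wx_def Wt_def using u V by (rule strip_partials_diff)
  have "antimono_on {0..1} (\<lambda>x. residual \<sigma> l0 l1 g0 g1 W Wx Wt x t)" if "t > 0" for t
    using monotone_onD[OF V_res[OF that]] u_eq that
    unfolding W_def Wx_def Wt_def residual_diff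
    by (auto intro!: monotone_onI)
  from residual_antimono_imp_antimono[OF W l0 l1 g0 g1 this _ t] init
  have "antimono_on {0..1} (\<lambda>x. W x t)"
    by (simp add: W_def)
  moreover have "((\<lambda>y. W y t) has_real_derivative Wx x t) (at x within {0..1})"
    using W x t by (simp add: strip_partials_def)
  ultimately have "Wx x t \<le> 0"
    using x by (rule antimono_on_has_real_derivative_nonpos) (use x in simp)
  then show ?thesis
    by (simp add: Wx_def)
qed

definition barrier :: "real \<Rightarrow> real \<Rightarrow> real \<Rightarrow> real \<Rightarrow> real" where
  "barrier a c x t = - 2 * exp (- c * t) * ln (1 - x + exp (- a * t))"

definition barrier_dx :: "real \<Rightarrow> real \<Rightarrow> real \<Rightarrow> real \<Rightarrow> real" where
  "barrier_dx a c x t = 2 * exp (- c * t) / (1 - x + exp (- a * t))"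

definition barrier_dt :: "real \<Rightarrow> real \<Rightarrow> real \<Rightarrow> real \<Rightarrow> real" where
  "barrier_dt a c x t =
     2 * c * exp (- c * t) * ln (1 - x + exp (- a * t))
     + 2 * a * exp (- a * t) * exp (- c * t) / (1 - x + exp (- a * t))"

lemma barrier_denom_pos:
  fixes x a t :: real
  shows "x \<le> 1 \<Longrightarrow> 0 < 1 - x + exp (- a * t)"
  using exp_gt_zero[of "- a * t"] by linarith

lemma barrier_strip_partials: "strip_partials (barrier a c) (barrier_dx a c) (barrier_dt a c)"
proof -
  have dx: "((\<lambda>y. barrier a c y t) has_real_derivative barrier_dx a c x t) (at x)"
    and dt: "((\<lambda>s. barrier a c x s) has_real_derivative barrier_dt a c x t) (at t)"
    if "x \<le> 1" for x t
    using barrier_denom_pos[OF that, of a t] unfolding barrier_def barrier_dx_def barrier_dt_def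
    by (auto intro!: derivative_eq_intros simp: field_simps)
  have "1 - fst p + exp (- a * snd p) \<noteq> 0" if "p \<in> {0..1} \<times> {0..}" for p
    using that barrier_denom_pos[of "fst p" a "snd p"] by auto
  then have "continuous_on ({0..1} \<times> {0..}) (\<lambda>p. 2 * exp (- c * snd p) / (1 - fst p + exp (- a * snd p)))"
    by (intro continuous_intros) auto
  moreover have "(\<lambda>(x, t). barrier_dx a c x t) = (\<lambda>p. 2 * exp (- c * snd p) / (1 - fst p + exp (- a * snd p)))"
    by (simp add: barrier_dx_def fun_eq_iff)
  ultimately show ?thesis
    unfolding strip_partials_def
    using has_field_derivative_at_within[OF dx] has_field_derivative_at_within[OF dt] by simp
qed

lemma barrier_jump_down_terms_mono:
  fixes b l1 g1 :: real
  assumes b: "b > 0" and l1: "l1 \<ge> 0" and g1: "g1 \<in> {0..1}"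
  shows "mono_on {0..1}
    (\<lambda>x. l1 * g1 * ln (1 - x + b) + l1 * (ln (1 - (x - g1 * x) + b) - ln (1 - x + b)))"
proof (rule deriv_nonneg_imp_mono_on)
  fix z :: real assume z: "z \<in> {0..1}"
  define q where "q = 1 - z + b"
  define q1 where "q1 = 1 - (z - g1 * z) + b"
  have q: "0 < q" "q \<le> q1"
    using z b g1 by (auto simp: q_def q1_def)
  show "((\<lambda>x. l1 * g1 * ln (1 - x + b) + l1 * (ln (1 - (x - g1 * x) + b) - ln (1 - x + b)))
      has_real_derivative l1 * g1 * (- 1 / q) + l1 * (- (1 - g1) / q1 - - 1 / q)) (at z)"
    unfolding q_def q1_def
    apply (rule DERIV_cong)
     apply (rule derivative_intros | (use q in \<open>simp add: q_def q1_def; fail\<close>))+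
    done
  have "l1 * g1 * (- 1 / q) + l1 * (- (1 - g1) / q1 - - 1 / q) = l1 * (1 - g1) * (1 / q - 1 / q1)"
    using q by (simp add: field_simps)
  also have "\<dots> \<ge> 0"
    using q l1 g1 by (simp add: frac_le)
  finally show "0 \<le> l1 * g1 * (- 1 / q) + l1 * (- (1 - g1) / q1 - - 1 / q)" .
qed

lemma barrier_drift_jump_up_terms_mono:
  fixes b \<sigma> l0 g0 :: real
  assumes b: "b > 0" and \<sigma>: "\<sigma> \<ge> 0" and l0: "l0 \<ge> 0" and g0: "g0 \<in> {0..1}"
  shows "mono_on {0..1}
    (\<lambda>x. (\<sigma> - l0 * g0) * b / (1 - x + b) + \<sigma> * (1 - x) * x / (1 - x + b)
         + l0 * (ln (1 - (x + g0 * (1 - x)) + b) - ln (1 - x + b)))"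
proof (rule deriv_nonneg_imp_mono_on)
  fix z :: real assume z: "z \<in> {0..1}"
  define q where "q = 1 - z + b"
  define q0 where "q0 = 1 - (z + g0 * (1 - z)) + b"
  have "q - q0 = g0 * (1 - z)" "q0 - b = (1 - g0) * (1 - z)"
    by (simp_all add: q_def q0_def algebra_simps)
  moreover have "0 \<le> g0 * (1 - z)" "0 \<le> (1 - g0) * (1 - z)"
    using g0 z by simp_all
  ultimately have q: "b \<le> q0" "q0 \<le> q"
    by linarith+
  with b have q_pos: "0 < q0" "0 < q"
    by linarith+
  define D where "D = (\<sigma> - l0 * g0) * b / q\<^sup>2 + \<sigma> * ((1 - 2 * z) * q + (1 - z) * z) / q\<^sup>2
    + l0 * (- (1 - g0) / q0 - - 1 / q)"
  show "((\<lambda>x. (\<sigma> - l0 * g0) * b / (1 - x + b) + \<sigma> * (1 - x) * x / (1 - x + b)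
         + l0 * (ln (1 - (x + g0 * (1 - x)) + b) - ln (1 - x + b))) has_real_derivative D) (at z)"
    unfolding D_def q_def q0_def
    apply (rule DERIV_cong)
     apply (rule derivative_intros | (use q_pos in \<open>simp add: q_def q0_def; fail\<close>))+
    by (simp add: power2_eq_square algebra_simps add_divide_distrib diff_divide_distrib)
  have "- (1 - g0) / q0 - - 1 / q = g0 * b / (q * q0)"
  proof -
    have "q0 - (1 - g0) * q = g0 * b"
      by (simp add: q_def q0_def algebra_simps)
    then show ?thesis
      using q_pos by (simp add: field_simps)
  qed
  also have "\<dots> \<ge> g0 * b / (q * q)"
    using q q_pos g0 b by (intro divide_left_mono mult_left_mono mult_pos_pos) auto
  finally have jump: "l0 * (- (1 - g0) / q0 - - 1 / q) \<ge> l0 * g0 * b / (q * q)"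
    using l0 mult_left_mono by fastforce
  \<comment> \<open>the choice of the coefficient \<sigma> - l0 * g0 makes the terms l0 * g0 * b cancel\<close>
  have "(\<sigma> - l0 * g0) * b / q\<^sup>2 + \<sigma> * ((1 - 2 * z) * q + (1 - z) * z) / q\<^sup>2 + l0 * g0 * b / (q * q)
      = \<sigma> * ((1 - z) * (1 - z) + 2 * (1 - z) * b) / (q * q)"
    by (simp add: q_def power2_eq_square add_divide_distrib[symmetric] algebra_simps)
  also have "\<dots> \<ge> 0"
    using \<sigma> z b q_pos by (intro divide_nonneg_nonneg mult_nonneg_nonneg add_nonneg_nonneg) auto
  finally show "0 \<le> D"
    using jump by (simp add: D_def)
qed

lemma barrier_residual_mono:
  fixes \<sigma> l0 l1 g0 g1 t :: real
  assumes \<sigma>: "\<sigma> \<ge> 0" and l0: "l0 \<ge> 0" and l1: "l1 \<ge> 0" and g0: "g0 \<in> {0..1}" and g1: "g1 \<in> {0..1}"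
  defines "a \<equiv> \<sigma> - l0 * g0" and "c \<equiv> l1 * g1"
  shows "mono_on {0..1} (\<lambda>x. residual \<sigma> l0 l1 g0 g1 (barrier a c) (barrier_dx a c) (barrier_dt a c) x t)"
proof -
  define b where "b = exp (- a * t)"
  define A where "A x = l1 * g1 * ln (1 - x + b) + l1 * (ln (1 - (x - g1 * x) + b) - ln (1 - x + b))" for x
  define B where "B x = (\<sigma> - l0 * g0) * b / (1 - x + b) + \<sigma> * (1 - x) * x / (1 - x + b)
    + l0 * (ln (1 - (x + g0 * (1 - x)) + b) - ln (1 - x + b))" for x
  have A: "mono_on {0..1} A" and B: "mono_on {0..1} B"
    unfolding A_def B_def b_def using assms
    by (intro barrier_jump_down_terms_mono barrier_drift_jump_up_terms_mono; simp)+
  have residual_eq: "residual \<sigma> l0 l1 g0 g1 (barrier a c) (barrier_dx a c) (barrier_dt a c) x t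
      = 2 * exp (- c * t) * (A x + B x)" if "x \<le> 1" for x
  proof -
    define E where "E = exp (- c * t)"
    define q where "q = 1 - x + b"
    have "q \<noteq> 0"
      using barrier_denom_pos[OF that, of a t] by (simp add: q_def b_def)
    then show ?thesis
      unfolding residual_def jump_terms_def barrier_def barrier_dx_def barrier_dt_def A_def B_def
        E_def[symmetric] b_def[symmetric] a_def[symmetric] c_def[symmetric] q_def[symmetric]
      by (simp add: field_simps)
  qed
  show ?thesis
  proof (rule monotone_onI)
    fix x y :: real assume "x \<in> {0..1}" "y \<in> {0..1}" "x \<le> y"
    then have "A x + B x \<le> A y + B y"
      using monotone_onD[OF A] monotone_onD[OF B] by (simp add: add_mono)
    with \<open>x \<in> {0..1}\<close> \<open>y \<in> {0..1}\<close> show "residual \<sigma> l0 l1 g0 g1 (barrier a c) (barrier_dx a c) (barrier_dt a c) x t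
        \<le> residual \<sigma> l0 l1 g0 g1 (barrier a c) (barrier_dx a c) (barrier_dt a c) y t"
      by (simp add: residual_eq)
  qed
qed

lemma barrier_initial_antimono: "antimono_on {0..1} (\<lambda>x. x - barrier a c x 0)"
proof (rule deriv_nonpos_imp_antimono_on)
  fix z :: real assume z: "z \<in> {0..1}"
  then have "0 < 1 - z + 1" by simp
  then show "((\<lambda>x. x - barrier a c x 0) has_real_derivative 1 - 2 / (1 - z + 1)) (at z)"
    unfolding barrier_def
    by (auto intro!: derivative_eq_intros simp: field_simps)
  show "1 - 2 / (1 - z + 1) \<le> 0"
    using z by (simp add: field_simps)
qed

theorem lemma4p5:
  fixes f0 f1 lam0 lam1 gam0 gam1 :: real
    and u ux ut :: "real \<Rightarrow> real \<Rightarrow> real"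
  assumes "f0 > 0" and "f1 \<ge> 0" and "f0 - f1 > 0"
    and "lam0 \<ge> 0" and "lam1 \<ge> 0"
    and "gam0 \<in> {0<..1}" and "gam1 \<in> {0<..1}"
    and "is_solution f0 f1 lam0 lam1 gam0 gam1 u ux ut"
    and "f0 - f1 \<ge> (lam0 * gam0) * f0 + (lam1 * gam1) * f1"
  shows "\<forall>x\<in>{0..1}. \<forall>t\<ge>0.
           ux x t \<le> 2 / (1 - x + exp (- ((f0 - f1) - (lam0 * gam0) * f0) * t))
                     * exp (- ((lam1 * gam1) * f1) * t)"
proof (intro ballI allI impI)
  fix x t :: real assume x: "x \<in> {0..1}" and t: "t \<ge> 0"
  define \<sigma> where "\<sigma> = f0 - f1"
  define l0 where "l0 = lam0 * f0"
  define l1 where "l1 = lam1 * f1"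
  define a where "a = \<sigma> - l0 * gam0"
  define c where "c = l1 * gam1"
  have params: "\<sigma> \<ge> 0" "l0 \<ge> 0" "l1 \<ge> 0" "gam0 \<in> {0..1}" "gam1 \<in> {0..1}"
    using assms(1-7) by (simp_all add: \<sigma>_def l0_def l1_def)
  have u: "strip_partials u ux ut"
    and u_eq: "\<And>x t. x \<in> {0..1} \<Longrightarrow> t > 0 \<Longrightarrow> residual \<sigma> l0 l1 gam0 gam1 u ux ut x t = 0"
    and u0: "\<And>x. x \<in> {0..1} \<Longrightarrow> u x 0 = x"
    using assms(8)
    by (auto simp: is_solution_def strip_partials_def residual_def jump_terms_def \<sigma>_def l0_def l1_def)
  have "antimono_on {0..1} (\<lambda>x. u x 0 - barrier a c x 0)"
    using barrier_initial_antimono[of a c] u0 by (simp add: monotone_on_def)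
  then have "ux x t \<le> barrier_dx a c x t"
    using dx_le_of_residual_mono[OF u u_eq barrier_strip_partials barrier_residual_mono[OF params]
        _ params(2-5) x t]
    by (simp add: a_def c_def)
  then show "ux x t \<le> 2 / (1 - x + exp (- ((f0 - f1) - (lam0 * gam0) * f0) * t))
                     * exp (- ((lam1 * gam1) * f1) * t)"
    by (simp add: barrier_dx_def a_def c_def \<sigma>_def l0_def l1_def algebra_simps)
qed

end
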